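(* Let $(R,\mathfrak m)$ be a Noetherian local ring of prime characteristic $p$ satisfying $(0:\mathfrak m^p)_R:=\{x\in R\mid \mathfrak m^p x=0\}\not\subseteq \mathfrak m^p$. Let $L_\bullet$ be a complex of finitely generated free $R$-modules whose differentials, written as matrices with respect to bases, have all entries in $\mathfrak m$. Then for every $r\ge 1$ and every integer $j$, $$H_j(L_\bullet\otimes_R {}^{\phi^r}\!R)=0 \iff L_j=0.$$
   Context: $\phi:R\to R$ denotes the Frobenius homomorphism $\phi(a)=a^p$. For $r\ge 1$, ${}^{\phi^r}\!R$ denotes the ring $R$ regarded as an $R$-module via $\phi^r$, i.e. $a\cdot b=a^{p^r}b$ for $a\in R$, $b\in {}^{\phi^r}\!R$. *)

theory Defs
  imports Main "HOL-Computational_Algebra.Primes"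
begin

definition is_ideal :: "'a::comm_ring_1 set \<Rightarrow> bool" where
  "is_ideal I \<longleftrightarrow> 0 \<in> I \<and> (\<forall>x\<in>I. \<forall>y\<in>I. x + y \<in> I) \<and> (\<forall>a. \<forall>x\<in>I. a * x \<in> I)"

definition ideal_span :: "'a::comm_ring_1 set \<Rightarrow> 'a set" where
  "ideal_span S = {\<Sum>x\<in>F. c x * x | F c. finite F \<and> F \<subseteq> S}"

definition maximal_ideal :: "'a::comm_ring_1 set \<Rightarrow> bool" where
  "maximal_ideal M \<longleftrightarrow> is_ideal M \<and> M \<noteq> UNIV \<and>
     (\<forall>J. is_ideal J \<and> M \<subseteq> J \<longrightarrow> J = M \<or> J = UNIV)"

definition noetherian_ring :: "'a::comm_ring_1 itself \<Rightarrow> bool" where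
  "noetherian_ring _ \<longleftrightarrow> (\<forall>I::'a set. is_ideal I \<longrightarrow> (\<exists>F. finite F \<and> I = ideal_span F))"

definition local_ring_with_max :: "'a::comm_ring_1 set \<Rightarrow> bool" where
  "local_ring_with_max m \<longleftrightarrow> maximal_ideal m \<and> (\<forall>M. maximal_ideal M \<longrightarrow> M = m)"

definition ideal_power :: "'a::comm_ring_1 set \<Rightarrow> nat \<Rightarrow> 'a set" where
  "ideal_power I k = ideal_span {prod_list xs | xs. length xs = k \<and> set xs \<subseteq> I}"

definition ann_ideal :: "'a::comm_ring_1 set \<Rightarrow> 'a set" where
  "ann_ideal J = {x. \<forall>y\<in>J. y * x = 0}"

(* A complex L of finitely generated free modules, given by bases:
   L_j = R^(rk j), differential d j : L_j \<rightarrow> L_(j-1) given by the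
   (rk (j-1)) x (rk j) matrix (i,k) \<mapsto> d j i k.  Entries outside the ranges are ignored. *)

definition vecs :: "nat \<Rightarrow> (nat \<Rightarrow> 'a::comm_ring_1) set" where
  "vecs n = {v. \<forall>i\<ge>n. v i = 0}"

definition is_free_complex :: "(int \<Rightarrow> nat) \<Rightarrow> (int \<Rightarrow> nat \<Rightarrow> nat \<Rightarrow> 'a::comm_ring_1) \<Rightarrow> bool" where
  "is_free_complex rk d \<longleftrightarrow>
     (\<forall>j i k. i < rk (j - 1) \<and> k < rk (j + 1) \<longrightarrow> (\<Sum>l<rk j. d j i l * d (j + 1) l k) = 0)"

definition homology_vanishes :: "(int \<Rightarrow> nat) \<Rightarrow> (int \<Rightarrow> nat \<Rightarrow> nat \<Rightarrow> 'a::comm_ring_1) \<Rightarrow> int \<Rightarrow> bool" where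
  "homology_vanishes rk d j \<longleftrightarrow>
     (\<forall>v\<in>vecs (rk j). (\<forall>i<rk (j - 1). (\<Sum>k<rk j. d j i k * v k) = 0) \<longrightarrow>
        (\<exists>w\<in>vecs (rk (j + 1)). \<forall>i<rk j. v i = (\<Sum>k<rk (j + 1). d (j + 1) i k * w k)))"

(* L \<otimes>_R ^{phi^r}R: with respect to the bases e \<otimes> 1, same ranks and
   differential matrices whose entries are raised to the p^r-th power. *)
definition frobenius_complex :: "nat \<Rightarrow> nat \<Rightarrow> (int \<Rightarrow> nat \<Rightarrow> nat \<Rightarrow> 'a::comm_ring_1) \<Rightarrow> (int \<Rightarrow> nat \<Rightarrow> nat \<Rightarrow> 'a)" where
  "frobenius_complex p r d = (\<lambda>j i k. d j i k ^ (p ^ r))"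

end

theory Submission
  imports Defs
begin

(* Take x in (0 : m^p) outside m^p and consider the vector x e_0 in L_j. Every entry of the
   Frobenius-twisted differentials is a (p^r)-th power of an element of m. *)

lemma is_ideal_mult_left: "is_ideal I \<Longrightarrow> x \<in> I \<Longrightarrow> a * x \<in> I"
  unfolding is_ideal_def by blast

lemma is_ideal_sum:
  assumes "is_ideal I" and "\<And>k. k \<in> A \<Longrightarrow> f k \<in> I"
  shows "sum f A \<in> I"
proof (cases "finite A")
  case True
  then show ?thesis using assms(2)
    by (induction A rule: finite_induct) (use assms(1) in \<open>auto simp: is_ideal_def\<close>)
qed (use assms(1) in \<open>simp add: is_ideal_def\<close>)

lemma ideal_span_base: "s \<in> S \<Longrightarrow> s \<in> ideal_span S"
  unfolding ideal_span_def
  by (intro CollectI exI[of _ "{s}"] exI[of _ "\<lambda>_. 1"]) auto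

lemma is_ideal_ideal_span: "is_ideal (ideal_span S)"
  unfolding is_ideal_def
proof (intro conjI ballI allI)
  show "0 \<in> ideal_span S"
    unfolding ideal_span_def by (intro CollectI exI[of _ "{}"]) auto
next
  fix a x assume "x \<in> ideal_span S"
  then obtain F c where F: "finite F" "F \<subseteq> S" "x = (\<Sum>y\<in>F. c y * y)"
    unfolding ideal_span_def by blast
  then have "a * x = (\<Sum>y\<in>F. (a * c y) * y)"
    by (simp add: sum_distrib_left mult.assoc)
  then show "a * x \<in> ideal_span S"
    unfolding ideal_span_def using F(1,2)
    by (intro CollectI exI[of _ F] exI[of _ "\<lambda>y. a * c y"]) simp
next
  fix x y assume "x \<in> ideal_span S" "y \<in> ideal_span S"
  then obtain F c G e where F: "finite F" "F \<subseteq> S" "x = (\<Sum>z\<in>F. c z * z)"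
    and G: "finite G" "G \<subseteq> S" "y = (\<Sum>z\<in>G. e z * z)"
    unfolding ideal_span_def by blast
  define ce where "ce z = (if z \<in> F then c z else 0) + (if z \<in> G then e z else 0)" for z
  have "ce z * z = (if z \<in> F then c z * z else 0) + (if z \<in> G then e z * z else 0)" for z
    unfolding ce_def by (simp add: distrib_right)
  then have "(\<Sum>z\<in>F \<union> G. ce z * z)
      = (\<Sum>z\<in>F \<union> G. if z \<in> F then c z * z else 0) + (\<Sum>z\<in>F \<union> G. if z \<in> G then e z * z else 0)"
    by (simp add: sum.distrib)
  also have "\<dots> = x + y"
    using F G by (simp add: sum.If_cases Int_absorb1)
  finally show "x + y \<in> ideal_span S"
    unfolding ideal_span_def using F(1,2) G(1,2)
    by (intro CollectI exI[of _ "F \<union> G"] exI[of _ ce]) auto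
qed

lemma is_ideal_ideal_power: "is_ideal (ideal_power I k)"
  unfolding ideal_power_def by (rule is_ideal_ideal_span)

lemma power_in_ideal_power: "y \<in> I \<Longrightarrow> y ^ k \<in> ideal_power I k"
  unfolding ideal_power_def
  by (intro ideal_span_base CollectI exI[of _ "replicate k y"]) auto

lemma power_in_ideal_power_if_le:
  assumes "y \<in> I" and "k \<le> n"
  shows "y ^ n \<in> ideal_power I k"
proof -
  have "y ^ n = y ^ (n - k) * y ^ k"
    using assms(2) by (simp flip: power_add)
  then show ?thesis
    using is_ideal_mult_left[OF is_ideal_ideal_power power_in_ideal_power[OF assms(1)]] by simp
qed

lemma homology_vanishes_if_rank_zero: "rk j = 0 \<Longrightarrow> homology_vanishes rk d j"
  unfolding homology_vanishes_def vecs_def by (auto intro!: bexI[of _ "\<lambda>_. 0"])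

lemma not_homology_vanishes_if_annihilator_not_in_ideal:
  assumes J: "is_ideal J" and x: "x \<in> ann_ideal J" "x \<notin> J" and "0 < rk j"
    and entries_in: "\<And>i k. i < rk (j - 1) \<Longrightarrow> k < rk j \<Longrightarrow> d j i k \<in> J"
    and entries_out: "\<And>k. k < rk (j + 1) \<Longrightarrow> d (j + 1) 0 k \<in> J"
  shows "\<not> homology_vanishes rk d j"
proof
  assume vanishes: "homology_vanishes rk d j"
  define v where "v i = (if i = 0 then x else 0)" for i :: nat
  have "v \<in> vecs (rk j)"
    unfolding v_def vecs_def using \<open>0 < rk j\<close> by auto
  moreover have "(\<Sum>k<rk j. d j i k * v k) = 0" if "i < rk (j - 1)" for i
  proof -
    have "(\<Sum>k<rk j. d j i k * v k) = d j i 0 * x"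
      using \<open>0 < rk j\<close> by (simp add: v_def if_distrib sum.delta cong: if_cong)
    also have "\<dots> = 0"
      using x(1) entries_in[OF that \<open>0 < rk j\<close>] by (simp add: ann_ideal_def)
    finally show ?thesis .
  qed
  ultimately obtain w where "\<forall>i<rk j. v i = (\<Sum>k<rk (j + 1). d (j + 1) i k * w k)"
    using vanishes unfolding homology_vanishes_def by blast
  then have "v 0 = (\<Sum>k<rk (j + 1). d (j + 1) 0 k * w k)"
    using \<open>0 < rk j\<close> by blast
  then have "x = (\<Sum>k<rk (j + 1). d (j + 1) 0 k * w k)"
    by (simp add: v_def)
  also have "\<dots> \<in> J"
    using J entries_out
    by (intro is_ideal_sum) (auto simp: mult.commute[of "d _ _ _"] intro: is_ideal_mult_left)
  finally show False using x(2) by contradiction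
qed

theorem mainTheorem2:
  fixes m :: "'a::comm_ring_1 set"
    and p :: nat
    and rk :: "int \<Rightarrow> nat"
    and d :: "int \<Rightarrow> nat \<Rightarrow> nat \<Rightarrow> 'a"
    and r :: nat and j :: int
  assumes "noetherian_ring TYPE('a)"
    and "local_ring_with_max m"
    and "prime p" and "CHAR('a) = p"
    and "\<not> (ann_ideal (ideal_power m p) \<subseteq> ideal_power m p)"
    and "is_free_complex rk d"
    and "\<And>j i k. i < rk (j - 1) \<Longrightarrow> k < rk j \<Longrightarrow> d j i k \<in> m"
    and "r \<ge> 1"
  shows "homology_vanishes rk (frobenius_complex p r d) j \<longleftrightarrow> rk j = 0"
proof -
  obtain x where x: "x \<in> ann_ideal (ideal_power m p)" "x \<notin> ideal_power m p"
    using assms(5) by blast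
  have "p \<le> p ^ r"
    using assms(8) prime_gt_0_nat[OF assms(3)] by (simp add: self_le_power)
  have entries_in_power: "frobenius_complex p r d j' i k \<in> ideal_power m p"
    if "i < rk (j' - 1)" "k < rk j'" for j' i k
    unfolding frobenius_complex_def
    by (rule power_in_ideal_power_if_le[OF assms(7)[OF that] \<open>p \<le> p ^ r\<close>])
  have "\<not> homology_vanishes rk (frobenius_complex p r d) j" if "rk j \<noteq> 0"
    using that entries_in_power
    by (intro not_homology_vanishes_if_annihilator_not_in_ideal[OF is_ideal_ideal_power x]) auto
  then show ?thesis
    using homology_vanishes_if_rank_zero by blast
qed

end
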